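(* Let $n,m,k\ge1$, fix $i\in\{1,\dots,n\}$, and let $f\in L^2((0,1)^n)$, $h_1\in L^2((0,1)^m)$, $h_2\in L^2((0,1)^{k+n-1})$ be real-valued, with $f$ not a.e. constant. Define $g(x,\xi,\eta)=f(x)h_1(\xi)+h_2(x_{\sim i},\eta)$ for $x\in(0,1)^n$, $\xi\in(0,1)^m$, $\eta\in(0,1)^k$, and assume $\mathrm{Var}(g)>0$ and $\int h_1^2>0$. Then $S^g_{T_{x_i}}=\gamma_{f,h_1,h_2}S^f_{T_{x_i}}$, where $$\gamma_{f,h_1,h_2}=\frac{\int f^2\,dx-f_0^2}{\int f^2\,dx-\frac{f_0^2(h_1)_0^2}{\int h_1^2\,d\xi}+\frac{\int\int h_2^2\,dx_{\sim i}\,d\eta-(h_2)_0^2}{\int h_1^2\,d\xi}+2(h_1)_0\frac{(fh_2)_0-f_0(h_2)_0}{\int h_1^2\,d\xi}}.$$ If additionally $(h_1)_0(fh_2)_0\ge f_0(h_1)_0(h_2)_0$, then $S^g_{T_{x_i}}\le S^f_{T_{x_i}}$.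
   Context: All integrals are with respect to Lebesgue measure over unit cubes (inputs independent, uniform on $[0,1]$). $x_{\sim i}=(x_1,\dots,x_{i-1},x_{i+1},\dots,x_n)$. For a function $\varphi$, $\varphi_0=\int\varphi$ is its mean and $\mathrm{Var}(\varphi)=\int\varphi^2-\varphi_0^2$; in particular $(fh_2)_0=\int f(x)h_2(x_{\sim i},\eta)\,dx\,d\eta$. For square-integrable $\varphi$ of variables $(x,y)$ the total Sobol index of $x_i$ is $$S^{\varphi}_{T_{x_i}}=\frac{\int\varphi^2\,dx\,dy-\int\big(\int\varphi\,dx_i\big)^2dx_{\sim i}\,dy}{\mathrm{Var}(\varphi)}.$$ *)

theory Defs
  imports "HOL-Analysis.Analysis"
begin

text \<open>Lebesgue measure on the unit interval, and on unit cubes indexed by a finite set I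
  of coordinates (points are extensional functions nat \<Rightarrow> real with domain I).\<close>
definition unitI :: "real measure" where
  "unitI = restrict_space lborel {0..1}"

definition cube :: "nat set \<Rightarrow> (nat \<Rightarrow> real) measure" where
  "cube I = PiM I (\<lambda>_. unitI)"

definition mean :: "'a measure \<Rightarrow> ('a \<Rightarrow> real) \<Rightarrow> real" where
  "mean M \<phi> = (\<integral>z. \<phi> z \<partial>M)"

definition var :: "'a measure \<Rightarrow> ('a \<Rightarrow> real) \<Rightarrow> real" where
  "var M \<phi> = (\<integral>z. (\<phi> z)^2 \<partial>M) - (mean M \<phi>)^2"

text \<open>Integrating the squared partial integral over all of (x,y) is the same as over
  (x_{~i},y) since it does not depend on x_i and unitI has total mass 1.\<close>
definition total_sobol ::
  "nat set \<Rightarrow> 'b measure \<Rightarrow> nat \<Rightarrow> ((nat \<Rightarrow> real) \<times> 'b \<Rightarrow> real) \<Rightarrow> real" where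
  "total_sobol I N i \<phi> =
     ((\<integral>z. (\<phi> z)^2 \<partial>(cube I \<Otimes>\<^sub>M N))
      - (\<integral>z. (\<integral>t. \<phi> ((fst z)(i := t), snd z) \<partial>unitI)^2 \<partial>(cube I \<Otimes>\<^sub>M N)))
     / var (cube I \<Otimes>\<^sub>M N) \<phi>"

definition total_sobol_x ::
  "nat set \<Rightarrow> nat \<Rightarrow> ((nat \<Rightarrow> real) \<Rightarrow> real) \<Rightarrow> real" where
  "total_sobol_x I i \<phi> =
     ((\<integral>x. (\<phi> x)^2 \<partial>cube I)
      - (\<integral>x. (\<integral>t. \<phi> (x(i := t)) \<partial>unitI)^2 \<partial>cube I))
     / var (cube I) \<phi>"

definition gamma_coef ::
  "nat \<Rightarrow> nat \<Rightarrow> nat \<Rightarrow> nat \<Rightarrow> ((nat \<Rightarrow> real) \<Rightarrow> real) \<Rightarrow> ((nat \<Rightarrow> real) \<Rightarrow> real)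
     \<Rightarrow> ((nat \<Rightarrow> real) \<Rightarrow> (nat \<Rightarrow> real) \<Rightarrow> real) \<Rightarrow> real" where
  "gamma_coef n m k i f h1 h2 =
    (let f0 = mean (cube {1..n}) f;
         h10 = mean (cube {1..m}) h1;
         h20 = mean (cube ({1..n} - {i}) \<Otimes>\<^sub>M cube {1..k}) (\<lambda>(u, \<eta>). h2 u \<eta>);
         fh20 = mean (cube {1..n} \<Otimes>\<^sub>M cube {1..k})
                  (\<lambda>(x, \<eta>). f x * h2 (restrict x ({1..n} - {i})) \<eta>);
         If2 = (\<integral>x. (f x)^2 \<partial>cube {1..n});
         Ih1 = (\<integral>\<xi>. (h1 \<xi>)^2 \<partial>cube {1..m});
         Ih2 = (\<integral>z. (case_prod h2 z)^2 \<partial>(cube ({1..n} - {i}) \<Otimes>\<^sub>M cube {1..k}))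
     in (If2 - f0^2) /
        (If2 - f0^2 * h10^2 / Ih1 + (Ih2 - h20^2) / Ih1 + 2 * h10 * ((fh20 - f0 * h20) / Ih1)))"

end

theory Submission
  imports Defs "HOL-Probability.Probability"
begin

(* Let P average a function over the coordinate x_i.  P is the conditional expectation given
   the remaining variables, an orthogonal projection on L^2, so the numerator of a total Sobol
   index is  int phi^2 - int (P phi)^2 = int (phi - P phi)^2.  Since h_2 does not depend on x_i,
   g - P g = (f - P f) h_1, and independence of the variables factors
   int (g - P g)^2 = int (f - P f)^2 * int h_1^2.  The same factorisation gives
   Var g = int f^2 int h_1^2 + 2 (h_1)_0 (f h_2)_0 + int h_2^2 - (f_0 (h_1)_0 + (h_2)_0)^2,
   which is int h_1^2 times the denominator of gamma; hence S^g = gamma S^f.  Finally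
   Var g - Var f * int h_1^2
     = f_0^2 (int h_1^2 - (h_1)_0^2) + 2 ((h_1)_0 (f h_2)_0 - f_0 (h_1)_0 (h_2)_0) + Var h_2,
   which is nonnegative under the extra hypothesis, and then S^g <= S^f. *)

definition measure_preserving :: "'a measure \<Rightarrow> 'b measure \<Rightarrow> ('a \<Rightarrow> 'b) \<Rightarrow> bool" where
  "measure_preserving M N T \<longleftrightarrow> T \<in> measurable M N \<and> distr M N T = N"

lemma measure_preservingI:
  "T \<in> measurable M N \<Longrightarrow> distr M N T = N \<Longrightarrow> measure_preserving M N T"
  by (simp add: measure_preserving_def)

lemma measure_preserving_measurable:
  "measure_preserving M N T \<Longrightarrow> T \<in> measurable M N"
  by (simp add: measure_preserving_def)

lemma measure_preserving_comp:
  assumes "measure_preserving M N T" "measure_preserving N L S"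
  shows "measure_preserving M L (S \<circ> T)"
  using assms distr_distr[of S N L T M] by (auto simp: measure_preserving_def)

lemma measure_preserving_pair:
  assumes "measure_preserving M M' T" "measure_preserving N N' S" "sigma_finite_measure N'"
  shows "measure_preserving (M \<Otimes>\<^sub>M N) (M' \<Otimes>\<^sub>M N') (\<lambda>(x, y). (T x, S y))"
  using assms pair_measure_distr[of T M M' S N N']
  by (auto simp: measure_preserving_def)

lemma measure_preserving_id: "measure_preserving M M (\<lambda>x. x)"
  by (simp add: measure_preserving_def distr_id2)

lemma (in prob_space) measure_preserving_fst:
  "measure_preserving (N \<Otimes>\<^sub>M M) N fst"
  by (simp add: measure_preserving_def distr_pair_fst)

lemma (in pair_sigma_finite) measure_preserving_swap:
  "measure_preserving (M1 \<Otimes>\<^sub>M M2) (M2 \<Otimes>\<^sub>M M1) (\<lambda>(x, y). (y, x))"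
  using pair_sigma_finite.distr_pair_swap[of M2 M1]
  by (simp add: measure_preserving_def pair_sigma_finite_def
      M1.sigma_finite_measure_axioms M2.sigma_finite_measure_axioms)

lemma measure_preserving_integrable:
  fixes \<phi> :: "'b \<Rightarrow> real"
  assumes "measure_preserving M N T" "integrable N \<phi>"
  shows "integrable M (\<lambda>x. \<phi> (T x))"
  using assms integrable_distr_eq[of T M N \<phi>] by (auto simp: measure_preserving_def)

lemma measure_preserving_integral:
  fixes \<phi> :: "'b \<Rightarrow> real"
  assumes "measure_preserving M N T" "\<phi> \<in> borel_measurable N"
  shows "(\<integral>x. \<phi> (T x) \<partial>M) = (\<integral>y. \<phi> y \<partial>N)"
  using assms integral_distr[of T M N \<phi>] by (auto simp: measure_preserving_def)

lemma measure_preserving_AE: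
  assumes "measure_preserving M N T" "AE y in N. P y"
  shows "AE x in M. P (T x)"
  using assms by (metis measure_preserving_def AE_distrD)

lemma measure_preserving_inverse:
  assumes T: "measure_preserving M N T" and S: "S \<in> measurable N M"
    and inv: "\<And>x. x \<in> space M \<Longrightarrow> S (T x) = x"
  shows "measure_preserving N M S"
proof (rule measure_preservingI[OF S])
  have "distr N M S = distr (distr M N T) M S"
    using T by (simp add: measure_preserving_def)
  also have "\<dots> = distr M M (S \<circ> T)"
    by (rule distr_distr) (use T S in \<open>auto simp: measure_preserving_def\<close>)
  also have "\<dots> = distr M M (\<lambda>x. x)"
    using inv by (intro distr_cong) auto
  finally show "distr N M S = M"
    by (simp add: distr_id2)
qed

lemma measure_preserving_pair_assoc:
  assumes "sigma_finite_measure A" "sigma_finite_measure B" "sigma_finite_measure C"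
  shows "measure_preserving (A \<Otimes>\<^sub>M (B \<Otimes>\<^sub>M C)) ((A \<Otimes>\<^sub>M B) \<Otimes>\<^sub>M C) (\<lambda>(a, b, c). ((a, b), c))"
proof (rule measure_preservingI)
  interpret B: sigma_finite_measure B by fact
  interpret C: sigma_finite_measure C by fact
  have BC: "sigma_finite_measure (B \<Otimes>\<^sub>M C)"
    by (rule sigma_finite_pair_measure) fact+
  let ?T = "\<lambda>(a, b, c). ((a, b), c)"
  show meas: "?T \<in> measurable (A \<Otimes>\<^sub>M (B \<Otimes>\<^sub>M C)) ((A \<Otimes>\<^sub>M B) \<Otimes>\<^sub>M C)"
    by measurable
  show "distr (A \<Otimes>\<^sub>M (B \<Otimes>\<^sub>M C)) ((A \<Otimes>\<^sub>M B) \<Otimes>\<^sub>M C) ?T = (A \<Otimes>\<^sub>M B) \<Otimes>\<^sub>M C"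
  proof (rule measure_eqI)
    fix S assume "S \<in> sets (distr (A \<Otimes>\<^sub>M (B \<Otimes>\<^sub>M C)) ((A \<Otimes>\<^sub>M B) \<Otimes>\<^sub>M C) ?T)"
    then have [measurable]: "S \<in> sets ((A \<Otimes>\<^sub>M B) \<Otimes>\<^sub>M C)" by simp
    have "emeasure (distr (A \<Otimes>\<^sub>M (B \<Otimes>\<^sub>M C)) ((A \<Otimes>\<^sub>M B) \<Otimes>\<^sub>M C) ?T) S
        = (\<integral>\<^sup>+ w. indicator S (?T w) \<partial>(A \<Otimes>\<^sub>M (B \<Otimes>\<^sub>M C)))"
      using meas
      by (simp add: nn_integral_indicator[symmetric] nn_integral_distr del: nn_integral_indicator)
    also have "\<dots> = (\<integral>\<^sup>+ a. \<integral>\<^sup>+ v. indicator S ((a, fst v), snd v) \<partial>(B \<Otimes>\<^sub>M C) \<partial>A)"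
      by (subst sigma_finite_measure.nn_integral_fst[OF BC, symmetric]) (simp_all add: split_beta')
    also have "\<dots> = (\<integral>\<^sup>+ a. \<integral>\<^sup>+ b. \<integral>\<^sup>+ c. indicator S ((a, b), c) \<partial>C \<partial>B \<partial>A)"
      by (intro nn_integral_cong, subst C.nn_integral_fst[symmetric]) simp_all
    also have "\<dots> = (\<integral>\<^sup>+ u. \<integral>\<^sup>+ c. indicator S (u, c) \<partial>C \<partial>(A \<Otimes>\<^sub>M B))"
      by (subst B.nn_integral_fst[symmetric]) simp_all
    also have "\<dots> = emeasure ((A \<Otimes>\<^sub>M B) \<Otimes>\<^sub>M C) S"
      by (simp add: C.emeasure_pair_measure)
    finally show "emeasure (distr (A \<Otimes>\<^sub>M (B \<Otimes>\<^sub>M C)) ((A \<Otimes>\<^sub>M B) \<Otimes>\<^sub>M C) ?T) S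
        = emeasure ((A \<Otimes>\<^sub>M B) \<Otimes>\<^sub>M C) S" .
  qed simp
qed

lemma measure_preserving_pair_exchange:
  assumes A: "sigma_finite_measure A" and B: "sigma_finite_measure B"
    and C: "sigma_finite_measure C"
  shows "measure_preserving (A \<Otimes>\<^sub>M (B \<Otimes>\<^sub>M C)) ((A \<Otimes>\<^sub>M C) \<Otimes>\<^sub>M B) (\<lambda>(a, b, c). ((a, c), b))"
proof -
  have swap: "measure_preserving (B \<Otimes>\<^sub>M C) (C \<Otimes>\<^sub>M B) (\<lambda>(b, c). (c, b))"
    using B C by (intro pair_sigma_finite.measure_preserving_swap) (simp add: pair_sigma_finite_def)
  have "measure_preserving (A \<Otimes>\<^sub>M (B \<Otimes>\<^sub>M C)) (A \<Otimes>\<^sub>M (C \<Otimes>\<^sub>M B))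
      (\<lambda>(a, v). (a, (\<lambda>(b, c). (c, b)) v))"
    using measure_preserving_pair[OF measure_preserving_id[of A] swap
        sigma_finite_pair_measure[OF C B]]
    by simp
  from measure_preserving_comp[OF this measure_preserving_pair_assoc[OF A C B]] show ?thesis
    by (simp add: comp_def split_beta')
qed

lemma measure_preserving_pair_resample:
  assumes T: "measure_preserving (M \<Otimes>\<^sub>M U) M T" and M: "sigma_finite_measure M"
    and U: "sigma_finite_measure U" and N: "sigma_finite_measure N"
  shows "measure_preserving ((M \<Otimes>\<^sub>M N) \<Otimes>\<^sub>M U) (M \<Otimes>\<^sub>M N) (\<lambda>(z, t). (T (fst z, t), snd z))"
proof -
  have "(\<lambda>w. (fst (fst w), snd (fst w), snd w)) \<in> measurable ((M \<Otimes>\<^sub>M N) \<Otimes>\<^sub>M U) (M \<Otimes>\<^sub>M (N \<Otimes>\<^sub>M U))"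
    by measurable
  then have unassoc: "measure_preserving ((M \<Otimes>\<^sub>M N) \<Otimes>\<^sub>M U) (M \<Otimes>\<^sub>M (N \<Otimes>\<^sub>M U))
      (\<lambda>w. (fst (fst w), snd (fst w), snd w))"
    by (rule measure_preserving_inverse[OF measure_preserving_pair_assoc[OF M N U]]) auto
  from measure_preserving_comp[OF
      measure_preserving_comp[OF unassoc measure_preserving_pair_exchange[OF M N U]]
      measure_preserving_pair[OF T measure_preserving_id N]]
  show ?thesis
    by (simp add: comp_def split_beta')
qed

lemma (in product_prob_space) measure_preserving_fun_upd:
  assumes "finite I" "i \<in> I"
  shows "measure_preserving (PiM I M \<Otimes>\<^sub>M M i) (PiM I M) (\<lambda>(x, t). x(i := t))"
proof (rule measure_preservingI)
  show meas: "(\<lambda>(x, t). x(i := t)) \<in> measurable (PiM I M \<Otimes>\<^sub>M M i) (PiM I M)"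
    using measurable_add_dim[of i I M] assms(2) by (simp add: insert_absorb)
  show "distr (PiM I M \<Otimes>\<^sub>M M i) (PiM I M) (\<lambda>(x, t). x(i := t)) = PiM I M"
  proof (rule PiM_eqI)
    fix A assume A: "\<And>j. j \<in> I \<Longrightarrow> A j \<in> sets (M j)"
    let ?A' = "A(i := space (M i))"
    have A'_sets: "Pi\<^sub>E I ?A' \<in> sets (PiM I M)"
      using A by (intro sets_PiM_I_finite) (auto simp: assms(1))
    have "(\<lambda>(x, t). x(i := t)) -` Pi\<^sub>E I A \<inter> space (PiM I M \<Otimes>\<^sub>M M i) = Pi\<^sub>E I ?A' \<times> A i"
      using A[THEN sets.sets_into_space] assms(2)
      by (auto simp: space_pair_measure space_PiM PiE_iff extensional_def split: if_splits) blast
    moreover have "emeasure (PiM I M) (Pi\<^sub>E I ?A') = (\<Prod>j\<in>I - {i}. emeasure (M j) (A j))"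
      using A assms M.emeasure_space_1 by (simp add: emeasure_PiM prod.remove)
    ultimately show "emeasure (distr (PiM I M \<Otimes>\<^sub>M M i) (PiM I M) (\<lambda>(x, t). x(i := t))) (Pi\<^sub>E I A)
        = (\<Prod>j\<in>I. emeasure (M j) (A j))"
      using A assms meas A'_sets
      by (simp add: emeasure_distr prod.remove mult.commute
          sigma_finite_measure.emeasure_pair_measure_Times[OF M.sigma_finite_measure])
  qed (use assms in simp_all)
qed

lemma (in prob_space) square_mean_le_second_moment:
  fixes f :: "'a \<Rightarrow> real"
  assumes "f \<in> borel_measurable M" "integrable M (\<lambda>x. (f x)^2)"
  shows "(\<integral>x. f x \<partial>M)^2 \<le> (\<integral>x. (f x)^2 \<partial>M)"
proof -
  have "integrable M f"
    using assms by (rule square_integrable_imp_integrable)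
  then have "variance f = (\<integral>x. (f x)^2 \<partial>M) - (\<integral>x. f x \<partial>M)^2"
    using assms by (intro variance_eq) auto
  moreover have "0 \<le> variance f"
    by (rule integral_nonneg_AE) auto
  ultimately show ?thesis
    by simp
qed

lemma (in prob_space) square_mean_less_second_moment:
  fixes f :: "'a \<Rightarrow> real"
  assumes meas: "f \<in> borel_measurable M" and sq: "integrable M (\<lambda>x. (f x)^2)"
    and nonconst: "\<not> (\<exists>c. AE x in M. f x = c)"
  shows "(\<integral>x. f x \<partial>M)^2 < (\<integral>x. (f x)^2 \<partial>M)"
proof (rule ccontr)
  assume "\<not> ?thesis"
  with square_mean_le_second_moment[OF meas sq]
  have "(\<integral>x. (f x)^2 \<partial>M) - (\<integral>x. f x \<partial>M)^2 = 0"
    by linarith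
  moreover have f: "integrable M f"
    using meas sq by (rule square_integrable_imp_integrable)
  ultimately have "variance f = 0"
    using sq by (simp add: variance_eq)
  moreover have "integrable M (\<lambda>x. (f x - expectation f)^2)"
    using f sq by (simp add: power2_diff)
  ultimately have "AE x in M. (f x - expectation f)^2 = 0"
    by (subst integral_nonneg_eq_0_iff_AE[symmetric]) auto
  then have "AE x in M. f x = expectation f"
    by eventually_elim simp
  with nonconst show False
    by blast
qed

lemma integrable_mult_of_square_integrable:
  fixes f g :: "'a \<Rightarrow> real"
  assumes "f \<in> borel_measurable M" "g \<in> borel_measurable M"
    and "integrable M (\<lambda>x. (f x)^2)" "integrable M (\<lambda>x. (g x)^2)"
  shows "integrable M (\<lambda>x. f x * g x)"
proof (rule Bochner_Integration.integrable_bound)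
  show "integrable M (\<lambda>x. (f x)^2 + (g x)^2)"
    using assms by simp
  have "\<bar>f x * g x\<bar> \<le> (f x)^2 + (g x)^2" for x
    using sum_squares_bound[of "\<bar>f x\<bar>" "\<bar>g x\<bar>"] abs_ge_zero[of "f x * g x"]
    by (simp only: abs_mult power2_abs)
  then show "AE x in M. norm (f x * g x) \<le> norm ((f x)^2 + (g x)^2)"
    by simp
qed (use assms in simp)

lemma (in pair_sigma_finite) integral_product:
  fixes p :: "'a \<Rightarrow> real" and q :: "'b \<Rightarrow> real"
  assumes p: "integrable M1 p" and q: "integrable M2 q"
  shows "integrable (M1 \<Otimes>\<^sub>M M2) (\<lambda>z. p (fst z) * q (snd z))"
    and "(\<integral>z. p (fst z) * q (snd z) \<partial>(M1 \<Otimes>\<^sub>M M2)) = (\<integral>x. p x \<partial>M1) * (\<integral>y. q y \<partial>M2)"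
proof -
  have [measurable]: "p \<in> borel_measurable M1" "q \<in> borel_measurable M2"
    using p q by auto
  show int: "integrable (M1 \<Otimes>\<^sub>M M2) (\<lambda>z. p (fst z) * q (snd z))"
  proof (rule Fubini_integrable)
    have "integrable M1 (\<lambda>x. \<bar>p x\<bar> * (\<integral>y. \<bar>q y\<bar> \<partial>M2))"
      using p by (intro integrable_mult_left integrable_abs)
    then show "integrable M1 (\<lambda>x. \<integral>y. norm (p (fst (x, y)) * q (snd (x, y))) \<partial>M2)"
      by (simp add: abs_mult)
  qed (use q in \<open>auto intro!: integrable_mult_right\<close>)
  show "(\<integral>z. p (fst z) * q (snd z) \<partial>(M1 \<Otimes>\<^sub>M M2)) = (\<integral>x. p x \<partial>M1) * (\<integral>y. q y \<partial>M2)"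
    using integral_fst'[OF int] by simp
qed

lemma integral_exchange_product:
  fixes p :: "'a \<times> 'c \<Rightarrow> real" and q :: "'b \<Rightarrow> real"
  assumes A: "sigma_finite_measure A" and B: "sigma_finite_measure B"
    and C: "sigma_finite_measure C"
    and p: "integrable (A \<Otimes>\<^sub>M C) p" and q: "integrable B q"
  shows "integrable (A \<Otimes>\<^sub>M (B \<Otimes>\<^sub>M C)) (\<lambda>w. p (fst w, snd (snd w)) * q (fst (snd w)))"
    and "(\<integral>w. p (fst w, snd (snd w)) * q (fst (snd w)) \<partial>(A \<Otimes>\<^sub>M (B \<Otimes>\<^sub>M C)))
           = (\<integral>u. p u \<partial>(A \<Otimes>\<^sub>M C)) * (\<integral>y. q y \<partial>B)"
proof -
  interpret pair_sigma_finite "A \<Otimes>\<^sub>M C" B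
    using A B C by (simp add: pair_sigma_finite_def sigma_finite_pair_measure)
  note exchange = measure_preserving_pair_exchange[OF A B C]
  have [measurable]: "(\<lambda>z. p (fst z) * q (snd z)) \<in> borel_measurable ((A \<Otimes>\<^sub>M C) \<Otimes>\<^sub>M B)"
    using integral_product(1)[OF p q] by auto
  show "integrable (A \<Otimes>\<^sub>M (B \<Otimes>\<^sub>M C)) (\<lambda>w. p (fst w, snd (snd w)) * q (fst (snd w)))"
    using measure_preserving_integrable[OF exchange integral_product(1)[OF p q]]
    by (simp add: split_beta')
  show "(\<integral>w. p (fst w, snd (snd w)) * q (fst (snd w)) \<partial>(A \<Otimes>\<^sub>M (B \<Otimes>\<^sub>M C)))
      = (\<integral>u. p u \<partial>(A \<Otimes>\<^sub>M C)) * (\<integral>y. q y \<partial>B)"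
    using measure_preserving_integral[OF exchange, of "\<lambda>z. p (fst z) * q (snd z)"]
      integral_product(2)[OF p q]
    by (simp add: split_beta')
qed

(* T (z, t) replaces one coordinate of z by t, so resampled_mean is the conditional expectation
   given the other coordinates. *)
locale resampling = M: prob_space M + U: prob_space U
  for M :: "'a measure" and U :: "'u measure" +
  fixes T :: "'a \<times> 'u \<Rightarrow> 'a"
  assumes preserving: "measure_preserving (M \<Otimes>\<^sub>M U) M T"
    and resample_twice: "\<And>z s t. T (T (z, s), t) = T (z, t)"
begin

definition resampled_mean :: "('a \<Rightarrow> real) \<Rightarrow> 'a \<Rightarrow> real" where
  "resampled_mean \<phi> z = (\<integral>t. \<phi> (T (z, t)) \<partial>U)"

sublocale pair_sigma_finite M U ..

lemma resampled_mean_resample: "resampled_mean \<phi> (T (z, t)) = resampled_mean \<phi> z"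
  by (simp add: resampled_mean_def resample_twice)

context
  fixes \<phi> :: "'a \<Rightarrow> real"
  assumes meas[measurable]: "\<phi> \<in> borel_measurable M"
    and sq: "integrable M (\<lambda>z. (\<phi> z)^2)"
begin

lemma measurable_resampled_mean[measurable]: "resampled_mean \<phi> \<in> borel_measurable M"
proof -
  have [measurable]: "T \<in> measurable (M \<Otimes>\<^sub>M U) M"
    using preserving by (rule measure_preserving_measurable)
  show ?thesis
    unfolding resampled_mean_def[abs_def] by measurable
qed

lemma AE_integrable_resample: "AE z in M. integrable U (\<lambda>t. \<phi> (T (z, t)))"
proof -
  have "integrable M \<phi>"
    using meas sq by (rule M.square_integrable_imp_integrable)
  from AE_integrable_fst'[OF measure_preserving_integrable[OF preserving this]]
  show ?thesis
    by simp
qed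

lemma integrable_resampled_mean_sq: "integrable M (\<lambda>z. (resampled_mean \<phi> z)^2)"
proof (rule Bochner_Integration.integrable_bound)
  have sq_T: "integrable (M \<Otimes>\<^sub>M U) (\<lambda>w. (\<phi> (T w))^2)"
    using measure_preserving_integrable[OF preserving sq] .
  then show "integrable M (\<lambda>z. \<integral>t. (\<phi> (T (z, t)))^2 \<partial>U)"
    using integrable_fst'[OF sq_T] by simp
  have [measurable]: "T \<in> measurable (M \<Otimes>\<^sub>M U) M"
    using preserving by (rule measure_preserving_measurable)
  show "AE z in M. norm ((resampled_mean \<phi> z)^2) \<le> norm (\<integral>t. (\<phi> (T (z, t)))^2 \<partial>U)"
    using AE_integrable_fst'[OF sq_T] AE_space
  proof eventually_elim
    case (elim z)
    then show ?case
      using U.square_mean_le_second_moment[of "\<lambda>t. \<phi> (T (z, t))"]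
      by (simp add: resampled_mean_def)
  qed
qed simp

lemma sq_sub_resampled_mean_eq:
  "(\<lambda>z. (\<phi> z - resampled_mean \<phi> z)^2)
     = (\<lambda>z. (\<phi> z)^2 - 2 * (\<phi> z * resampled_mean \<phi> z) + (resampled_mean \<phi> z)^2)"
  by (simp add: fun_eq_iff power2_diff)

lemma integrable_mult_resampled_mean: "integrable M (\<lambda>z. \<phi> z * resampled_mean \<phi> z)"
  by (intro integrable_mult_of_square_integrable meas measurable_resampled_mean sq
      integrable_resampled_mean_sq)

lemma integral_mult_resampled_mean:
  "(\<integral>z. \<phi> z * resampled_mean \<phi> z \<partial>M) = (\<integral>z. (resampled_mean \<phi> z)^2 \<partial>M)"
proof -
  let ?P = "resampled_mean \<phi>"
  have "(\<integral>z. \<phi> z * ?P z \<partial>M) = (\<integral>w. \<phi> (T w) * ?P (T w) \<partial>(M \<Otimes>\<^sub>M U))"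
    using measure_preserving_integral[OF preserving, of "\<lambda>z. \<phi> z * ?P z"] by simp
  also have "\<dots> = (\<integral>z. \<integral>t. \<phi> (T (z, t)) * ?P z \<partial>U \<partial>M)"
    using integral_fst'[OF
        measure_preserving_integrable[OF preserving integrable_mult_resampled_mean]]
    by (simp add: resampled_mean_resample)
  also have "\<dots> = (\<integral>z. (?P z)^2 \<partial>M)"
    by (simp add: resampled_mean_def power2_eq_square)
  finally show ?thesis .
qed

lemma integrable_sq_sub_resampled_mean:
  "integrable M (\<lambda>z. (\<phi> z - resampled_mean \<phi> z)^2)"
  unfolding sq_sub_resampled_mean_eq
  by (intro Bochner_Integration.integrable_add Bochner_Integration.integrable_diff
      integrable_mult_right sq integrable_mult_resampled_mean integrable_resampled_mean_sq)

lemma second_moment_sub_resampled_mean: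
  "(\<integral>z. (\<phi> z)^2 \<partial>M) - (\<integral>z. (resampled_mean \<phi> z)^2 \<partial>M)
     = (\<integral>z. (\<phi> z - resampled_mean \<phi> z)^2 \<partial>M)"
  unfolding sq_sub_resampled_mean_eq
  by (simp add: sq integrable_mult_resampled_mean integrable_resampled_mean_sq
      integral_mult_resampled_mean)

end

end

lemma prob_space_unitI: "prob_space unitI"
  unfolding unitI_def by (rule prob_space_restrict_space) auto

lemma product_prob_space_unitI: "product_prob_space (\<lambda>_. unitI)"
  by (simp add: product_prob_space_def product_prob_space_axioms_def product_sigma_finite_def
      prob_space_unitI prob_space_imp_sigma_finite)

lemma prob_space_cube: "prob_space (cube I)"
  unfolding cube_def by (rule prob_space_PiM) (rule prob_space_unitI)

lemma measure_preserving_restrict_cube: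
  assumes "finite I" "J \<subseteq> I"
  shows "measure_preserving (cube I) (cube J) (\<lambda>x. restrict x J)"
proof (rule measure_preservingI)
  show "(\<lambda>x. restrict x J) \<in> measurable (cube I) (cube J)"
    unfolding cube_def using assms(2) by (rule measurable_restrict_subset)
  show "distr (cube I) (cube J) (\<lambda>x. restrict x J) = cube J"
    unfolding cube_def using assms finite_subset
    by (intro product_prob_space.distr_PiM_restrict_finite[OF product_prob_space_unitI]) auto
qed

lemma resampling_cube:
  assumes "finite I" "i \<in> I"
  shows "resampling (cube I) unitI (\<lambda>(x, t). x(i := t))"
  using product_prob_space.measure_preserving_fun_upd[OF product_prob_space_unitI assms,
      folded cube_def]
  by (simp add: resampling_def resampling_axioms_def prob_space_cube prob_space_unitI)

lemma resampling_cube_pair: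
  assumes "finite I" "i \<in> I" "prob_space N"
  shows "resampling (cube I \<Otimes>\<^sub>M N) unitI (\<lambda>(z, t). ((fst z)(i := t), snd z))"
proof -
  have sigma_finite:
    "sigma_finite_measure (cube I)" "sigma_finite_measure unitI" "sigma_finite_measure N"
    using assms(3) by (simp_all add: prob_space_imp_sigma_finite prob_space_cube prob_space_unitI)
  from measure_preserving_pair_resample[OF
      resampling.preserving[OF resampling_cube[OF assms(1,2)]] sigma_finite]
  have "measure_preserving ((cube I \<Otimes>\<^sub>M N) \<Otimes>\<^sub>M unitI) (cube I \<Otimes>\<^sub>M N)
      (\<lambda>(z, t). ((fst z)(i := t), snd z))"
    by (simp add: split_beta')
  then show ?thesis
    using assms(3) by (simp add: resampling_def resampling_axioms_def prob_space_pair
        prob_space_cube prob_space_unitI)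
qed

locale separable_model = B: prob_space B + C: prob_space C
  for B :: "'b measure" and C :: "'c measure" +
  fixes I :: "nat set" and i :: nat
    and f :: "(nat \<Rightarrow> real) \<Rightarrow> real" and h1 :: "'b \<Rightarrow> real"
    and h2 :: "(nat \<Rightarrow> real) \<Rightarrow> 'c \<Rightarrow> real"
  assumes finite_I: "finite I" and i_in_I: "i \<in> I"
    and f_meas[measurable]: "f \<in> borel_measurable (cube I)"
    and f_L2: "integrable (cube I) (\<lambda>x. (f x)^2)"
    and h1_meas[measurable]: "h1 \<in> borel_measurable B"
    and h1_L2: "integrable B (\<lambda>\<xi>. (h1 \<xi>)^2)"
    and h2_meas: "case_prod h2 \<in> borel_measurable (cube (I - {i}) \<Otimes>\<^sub>M C)"
    and h2_L2: "integrable (cube (I - {i}) \<Otimes>\<^sub>M C) (\<lambda>(u, \<eta>). (h2 u \<eta>)^2)"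
begin

sublocale A: prob_space "cube I"
  by (rule prob_space_cube)

definition h2_lift :: "(nat \<Rightarrow> real) \<times> 'c \<Rightarrow> real" where
  "h2_lift = (\<lambda>(x, \<eta>). h2 (restrict x (I - {i})) \<eta>)"

definition model_fun :: "(nat \<Rightarrow> real) \<times> 'b \<times> 'c \<Rightarrow> real" where
  "model_fun = (\<lambda>(x, \<xi>, \<eta>). f x * h1 \<xi> + h2_lift (x, \<eta>))"

lemma prob_space_cube_pair_C: "prob_space (cube J \<Otimes>\<^sub>M C)"
  by (intro prob_space_pair prob_space_cube C.prob_space_axioms)

lemma sigma_finite_model:
  "sigma_finite_measure (cube I)" "sigma_finite_measure B" "sigma_finite_measure C"
  by unfold_locales

lemma h2_lift_fun_upd [simp]: "h2_lift (x(i := t), \<eta>) = h2_lift (x, \<eta>)"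
proof -
  have "restrict (x(i := t)) (I - {i}) = restrict x (I - {i})"
    by (auto simp: restrict_def)
  then show ?thesis
    by (simp add: h2_lift_def)
qed

lemma measure_preserving_restrict:
  "measure_preserving (cube I \<Otimes>\<^sub>M C) (cube (I - {i}) \<Otimes>\<^sub>M C) (\<lambda>(x, \<eta>). (restrict x (I - {i}), \<eta>))"
  using measure_preserving_pair[OF measure_preserving_restrict_cube[OF finite_I, of "I - {i}"]
      measure_preserving_id sigma_finite_model(3)]
  by auto

lemma measure_preserving_fst_cube: "measure_preserving (cube I \<Otimes>\<^sub>M C) (cube I) fst"
  by (rule C.measure_preserving_fst)

lemma integrable_h2_lift:
  "integrable (cube I \<Otimes>\<^sub>M C) h2_lift" "integrable (cube I \<Otimes>\<^sub>M C) (\<lambda>w. (h2_lift w)^2)"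
  and integral_h2_lift:
  "(\<integral>w. h2_lift w \<partial>(cube I \<Otimes>\<^sub>M C)) = (\<integral>u. case_prod h2 u \<partial>(cube (I - {i}) \<Otimes>\<^sub>M C))"
  "(\<integral>w. (h2_lift w)^2 \<partial>(cube I \<Otimes>\<^sub>M C)) = (\<integral>u. (case_prod h2 u)^2 \<partial>(cube (I - {i}) \<Otimes>\<^sub>M C))"
proof -
  interpret RC: prob_space "cube (I - {i}) \<Otimes>\<^sub>M C"
    by (rule prob_space_cube_pair_C)
  have sq: "integrable (cube (I - {i}) \<Otimes>\<^sub>M C) (\<lambda>u. (case_prod h2 u)^2)"
    using h2_L2 by (simp add: split_beta')
  have int: "integrable (cube (I - {i}) \<Otimes>\<^sub>M C) (case_prod h2)"
    using h2_meas sq by (rule RC.square_integrable_imp_integrable)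
  show "integrable (cube I \<Otimes>\<^sub>M C) h2_lift" "integrable (cube I \<Otimes>\<^sub>M C) (\<lambda>w. (h2_lift w)^2)"
    using measure_preserving_integrable[OF measure_preserving_restrict int]
      measure_preserving_integrable[OF measure_preserving_restrict sq]
    by (simp_all add: h2_lift_def split_beta')
  show "(\<integral>w. h2_lift w \<partial>(cube I \<Otimes>\<^sub>M C)) = (\<integral>u. case_prod h2 u \<partial>(cube (I - {i}) \<Otimes>\<^sub>M C))"
    "(\<integral>w. (h2_lift w)^2 \<partial>(cube I \<Otimes>\<^sub>M C)) = (\<integral>u. (case_prod h2 u)^2 \<partial>(cube (I - {i}) \<Otimes>\<^sub>M C))"
    using measure_preserving_integral[OF measure_preserving_restrict, of "case_prod h2"]
      measure_preserving_integral[OF measure_preserving_restrict, of "\<lambda>u. (case_prod h2 u)^2"]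
      h2_meas
    by (simp_all add: h2_lift_def split_beta')
qed

lemma integrable_f: "integrable (cube I) f"
  by (rule A.square_integrable_imp_integrable[OF f_meas f_L2])

lemma integrable_h1: "integrable B h1"
  by (rule B.square_integrable_imp_integrable[OF h1_meas h1_L2])

lemma integrable_f_h2_lift: "integrable (cube I \<Otimes>\<^sub>M C) (\<lambda>w. f (fst w) * h2_lift w)"
  using measure_preserving_integrable[OF measure_preserving_fst_cube f_L2] integrable_h2_lift
  by (intro integrable_mult_of_square_integrable) auto

lemma integral_model_fun:
  "(\<integral>z. model_fun z \<partial>(cube I \<Otimes>\<^sub>M (B \<Otimes>\<^sub>M C)))
     = (\<integral>x. f x \<partial>cube I) * (\<integral>\<xi>. h1 \<xi> \<partial>B) + (\<integral>u. case_prod h2 u \<partial>(cube (I - {i}) \<Otimes>\<^sub>M C))"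
proof -
  note product = integral_exchange_product[OF sigma_finite_model]
  have f_fst: "integrable (cube I \<Otimes>\<^sub>M C) (\<lambda>w. f (fst w))"
    using measure_preserving_integrable[OF measure_preserving_fst_cube integrable_f] .
  have one: "integrable B (\<lambda>_. 1::real)" "(\<integral>_. 1 \<partial>B) = (1::real)"
    by (simp_all add: B.prob_space)
  have "model_fun = (\<lambda>w. f (fst w) * h1 (fst (snd w)) + h2_lift (fst w, snd (snd w)) * 1)"
    by (simp add: model_fun_def fun_eq_iff)
  then show ?thesis
    using product[OF f_fst integrable_h1] product[OF integrable_h2_lift(1) one(1)] one(2)
      measure_preserving_integral[OF measure_preserving_fst_cube f_meas] integral_h2_lift(1)
    by simp
qed

lemma model_fun_sq_eq:
  "(\<lambda>z. (model_fun z)^2) = (\<lambda>w. ((f (fst w))^2 * (h1 (fst (snd w)))^2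
      + 2 * (f (fst w) * h2_lift (fst w, snd (snd w)) * h1 (fst (snd w))))
      + (h2_lift (fst w, snd (snd w)))^2 * 1)"
  by (simp add: fun_eq_iff model_fun_def power2_eq_square algebra_simps)

lemma integrable_model_fun_sq: "integrable (cube I \<Otimes>\<^sub>M (B \<Otimes>\<^sub>M C)) (\<lambda>z. (model_fun z)^2)"
  and integral_model_fun_sq:
  "(\<integral>z. (model_fun z)^2 \<partial>(cube I \<Otimes>\<^sub>M (B \<Otimes>\<^sub>M C)))
     = (\<integral>x. (f x)^2 \<partial>cube I) * (\<integral>\<xi>. (h1 \<xi>)^2 \<partial>B)
       + 2 * (\<integral>\<xi>. h1 \<xi> \<partial>B) * (\<integral>(x, \<eta>). f x * h2 (restrict x (I - {i})) \<eta> \<partial>(cube I \<Otimes>\<^sub>M C))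
       + (\<integral>u. (case_prod h2 u)^2 \<partial>(cube (I - {i}) \<Otimes>\<^sub>M C))"
proof -
  note product = integral_exchange_product[OF sigma_finite_model]
  have f_sq_fst: "integrable (cube I \<Otimes>\<^sub>M C) (\<lambda>w. (f (fst w))^2)"
    using measure_preserving_integrable[OF measure_preserving_fst_cube f_L2] .
  have one: "integrable B (\<lambda>_. 1::real)" "(\<integral>_. 1 \<partial>B) = (1::real)"
    by (simp_all add: B.prob_space)
  note terms = product[OF f_sq_fst h1_L2] product[OF integrable_f_h2_lift integrable_h1]
    product[OF integrable_h2_lift(2) one(1)]
  show "integrable (cube I \<Otimes>\<^sub>M (B \<Otimes>\<^sub>M C)) (\<lambda>z. (model_fun z)^2)"
    unfolding model_fun_sq_eq using terms(1,3,5) by simp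
  have "(\<integral>w. f (fst w) * h2_lift w \<partial>(cube I \<Otimes>\<^sub>M C))
      = (\<integral>(x, \<eta>). f x * h2 (restrict x (I - {i})) \<eta> \<partial>(cube I \<Otimes>\<^sub>M C))"
    by (simp add: h2_lift_def split_beta')
  then show "(\<integral>z. (model_fun z)^2 \<partial>(cube I \<Otimes>\<^sub>M (B \<Otimes>\<^sub>M C)))
     = (\<integral>x. (f x)^2 \<partial>cube I) * (\<integral>\<xi>. (h1 \<xi>)^2 \<partial>B)
       + 2 * (\<integral>\<xi>. h1 \<xi> \<partial>B) * (\<integral>(x, \<eta>). f x * h2 (restrict x (I - {i})) \<eta> \<partial>(cube I \<Otimes>\<^sub>M C))
       + (\<integral>u. (case_prod h2 u)^2 \<partial>(cube (I - {i}) \<Otimes>\<^sub>M C))"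
    unfolding model_fun_sq_eq using terms one(2) integral_h2_lift(2)
      measure_preserving_integral[OF measure_preserving_fst_cube, of "\<lambda>x. (f x)^2"]
    by simp
qed

lemma measurable_model_fun[measurable]: "model_fun \<in> borel_measurable (cube I \<Otimes>\<^sub>M (B \<Otimes>\<^sub>M C))"
proof -
  have [measurable]: "h2_lift \<in> borel_measurable (cube I \<Otimes>\<^sub>M C)"
    using integrable_h2_lift(1) by auto
  have "model_fun = (\<lambda>z. f (fst z) * h1 (fst (snd z)) + h2_lift (fst z, snd (snd z)))"
    by (simp add: fun_eq_iff model_fun_def)
  then show ?thesis
    by simp
qed

lemma AE_model_fun_sub_resampled:
  "AE z in cube I \<Otimes>\<^sub>M (B \<Otimes>\<^sub>M C).
     model_fun z - (\<integral>t. model_fun ((fst z)(i := t), snd z) \<partial>unitI)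
       = (f (fst z) - (\<integral>t. f ((fst z)(i := t)) \<partial>unitI)) * h1 (fst (snd z))"
proof -
  interpret Rf: resampling "cube I" unitI "\<lambda>(x, t). x(i := t)"
    by (rule resampling_cube[OF finite_I i_in_I])
  have BC: "prob_space (B \<Otimes>\<^sub>M C)"
    by (intro prob_space_pair B.prob_space_axioms C.prob_space_axioms)
  have "AE x in cube I. integrable unitI (\<lambda>t. f (x(i := t)))"
    using Rf.AE_integrable_resample[OF f_meas f_L2] by simp
  from measure_preserving_AE[OF prob_space.measure_preserving_fst[OF BC] this]
  show ?thesis
  proof eventually_elim
    case (elim z)
    then have "(\<integral>t. model_fun ((fst z)(i := t), snd z) \<partial>unitI)
        = (\<integral>t. f ((fst z)(i := t)) \<partial>unitI) * h1 (fst (snd z)) + h2_lift (fst z, snd (snd z))"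
      by (simp add: model_fun_def split_beta' Rf.U.prob_space)
    then show ?case
      by (simp add: model_fun_def split_beta' algebra_simps)
  qed
qed

lemma sobol_numerator_model_fun:
  "(\<integral>z. (model_fun z)^2 \<partial>(cube I \<Otimes>\<^sub>M (B \<Otimes>\<^sub>M C)))
     - (\<integral>z. (\<integral>t. model_fun ((fst z)(i := t), snd z) \<partial>unitI)^2 \<partial>(cube I \<Otimes>\<^sub>M (B \<Otimes>\<^sub>M C)))
   = ((\<integral>x. (f x)^2 \<partial>cube I) - (\<integral>x. (\<integral>t. f (x(i := t)) \<partial>unitI)^2 \<partial>cube I))
     * (\<integral>\<xi>. (h1 \<xi>)^2 \<partial>B)"
proof -
  have BC: "prob_space (B \<Otimes>\<^sub>M C)"
    by (intro prob_space_pair B.prob_space_axioms C.prob_space_axioms)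
  interpret Rf: resampling "cube I" unitI "\<lambda>(x, t). x(i := t)"
    by (rule resampling_cube[OF finite_I i_in_I])
  interpret Rg: resampling "cube I \<Otimes>\<^sub>M (B \<Otimes>\<^sub>M C)" unitI "\<lambda>(z, t). ((fst z)(i := t), snd z)"
    by (rule resampling_cube_pair[OF finite_I i_in_I BC])
  let ?Pf = "Rf.resampled_mean f" and ?Pg = "Rg.resampled_mean model_fun"
  have Pf: "?Pf x = (\<integral>t. f (x(i := t)) \<partial>unitI)" for x
    by (simp add: Rf.resampled_mean_def)
  have Pg: "?Pg z = (\<integral>t. model_fun ((fst z)(i := t), snd z) \<partial>unitI)" for z
    by (simp add: Rg.resampled_mean_def)
  have "AE z in cube I \<Otimes>\<^sub>M (B \<Otimes>\<^sub>M C).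
      (model_fun z - ?Pg z)^2 = (f (fst z) - ?Pf (fst z))^2 * (h1 (fst (snd z)))^2"
    using AE_model_fun_sub_resampled by eventually_elim (simp add: Pf Pg power_mult_distrib)
  then have "(\<integral>z. (model_fun z - ?Pg z)^2 \<partial>(cube I \<Otimes>\<^sub>M (B \<Otimes>\<^sub>M C)))
      = (\<integral>z. (f (fst z) - ?Pf (fst z))^2 * (h1 (fst (snd z)))^2 \<partial>(cube I \<Otimes>\<^sub>M (B \<Otimes>\<^sub>M C)))"
    using Rf.measurable_resampled_mean[OF f_meas f_L2]
      Rg.measurable_resampled_mean[OF measurable_model_fun integrable_model_fun_sq]
    by (intro integral_cong_AE) simp_all
  also have "\<dots> = (\<integral>w. (f (fst w) - ?Pf (fst w))^2 \<partial>(cube I \<Otimes>\<^sub>M C)) * (\<integral>\<xi>. (h1 \<xi>)^2 \<partial>B)"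
    using integral_exchange_product(2)[OF sigma_finite_model measure_preserving_integrable[OF
        measure_preserving_fst_cube Rf.integrable_sq_sub_resampled_mean[OF f_meas f_L2]] h1_L2]
    by simp
  also have "\<dots> = (\<integral>x. (f x - ?Pf x)^2 \<partial>cube I) * (\<integral>\<xi>. (h1 \<xi>)^2 \<partial>B)"
    using Rf.measurable_resampled_mean[OF f_meas f_L2]
    by (subst measure_preserving_integral[OF measure_preserving_fst_cube]) simp_all
  finally show ?thesis
    using Rg.second_moment_sub_resampled_mean[OF measurable_model_fun integrable_model_fun_sq]
      Rf.second_moment_sub_resampled_mean[OF f_meas f_L2]
    by (simp add: Pf Pg)
qed

lemma sobol_numerator_f_nonneg:
  "0 \<le> (\<integral>x. (f x)^2 \<partial>cube I) - (\<integral>x. (\<integral>t. f (x(i := t)) \<partial>unitI)^2 \<partial>cube I)"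
proof -
  interpret Rf: resampling "cube I" unitI "\<lambda>(x, t). x(i := t)"
    by (rule resampling_cube[OF finite_I i_in_I])
  have "0 \<le> (\<integral>x. (f x - Rf.resampled_mean f x)^2 \<partial>cube I)"
    by simp
  then show ?thesis
    using Rf.second_moment_sub_resampled_mean[OF f_meas f_L2] by (simp add: Rf.resampled_mean_def)
qed

lemma var_model_fun:
  "var (cube I \<Otimes>\<^sub>M (B \<Otimes>\<^sub>M C)) model_fun
   = ((\<integral>x. (f x)^2 \<partial>cube I) * (\<integral>\<xi>. (h1 \<xi>)^2 \<partial>B)
       + 2 * (\<integral>\<xi>. h1 \<xi> \<partial>B) * (\<integral>(x, \<eta>). f x * h2 (restrict x (I - {i})) \<eta> \<partial>(cube I \<Otimes>\<^sub>M C))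
       + (\<integral>u. (case_prod h2 u)^2 \<partial>(cube (I - {i}) \<Otimes>\<^sub>M C)))
     - ((\<integral>x. f x \<partial>cube I) * (\<integral>\<xi>. h1 \<xi> \<partial>B)
       + (\<integral>u. case_prod h2 u \<partial>(cube (I - {i}) \<Otimes>\<^sub>M C)))^2"
  unfolding var_def mean_def integral_model_fun integral_model_fun_sq ..

lemma total_sobol_model_fun:
  "total_sobol I (B \<Otimes>\<^sub>M C) i model_fun
   = ((\<integral>x. (f x)^2 \<partial>cube I) - (\<integral>x. (\<integral>t. f (x(i := t)) \<partial>unitI)^2 \<partial>cube I))
     * (\<integral>\<xi>. (h1 \<xi>)^2 \<partial>B) / var (cube I \<Otimes>\<^sub>M (B \<Otimes>\<^sub>M C)) model_fun"
  unfolding total_sobol_def sobol_numerator_model_fun ..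

end

lemma variance_model_ge:
  fixes s Ef2 f0 h10 fh Eh2 h20 :: real
  assumes "f0 * h10 * h20 \<le> h10 * fh" "h10^2 \<le> s" "h20^2 \<le> Eh2"
  shows "(Ef2 - f0^2) * s \<le> (Ef2 * s + 2 * h10 * fh + Eh2) - (f0 * h10 + h20)^2"
proof -
  have "(Ef2 * s + 2 * h10 * fh + Eh2) - (f0 * h10 + h20)^2 - (Ef2 - f0^2) * s
      = f0^2 * (s - h10^2) + 2 * (h10 * fh - f0 * h10 * h20) + (Eh2 - h20^2)"
    by (simp add: power2_eq_square algebra_simps)
  also have "\<dots> \<ge> 0"
    using assms by (intro add_nonneg_nonneg mult_nonneg_nonneg) auto
  finally show ?thesis
    by simp
qed

lemma sobol_index_algebra:
  fixes Nf s Ef2 f0 h10 fh Eh2 h20 :: real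
  defines "V \<equiv> (Ef2 * s + 2 * h10 * fh + Eh2) - (f0 * h10 + h20)^2"
  assumes s: "0 < s" and Vf: "f0^2 < Ef2" and V: "0 < V" and Nf: "0 \<le> Nf"
    and h10: "h10^2 \<le> s" and h20: "h20^2 \<le> Eh2"
  shows "Nf * s / V = (Ef2 - f0^2)
           / (Ef2 - f0^2 * h10^2 / s + (Eh2 - h20^2) / s + 2 * h10 * ((fh - f0 * h20) / s))
           * (Nf / (Ef2 - f0^2))
     \<and> (h10 * fh \<ge> f0 * h10 * h20 \<longrightarrow> Nf * s / V \<le> Nf / (Ef2 - f0^2))"
proof (intro conjI impI)
  have "Ef2 - f0^2 * h10^2 / s + (Eh2 - h20^2) / s + 2 * h10 * ((fh - f0 * h20) / s) = V / s"
    using s by (simp add: V_def field_simps power2_eq_square)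
  moreover have "a / (V / s) * (Nf / a) = Nf * s / V" if "a \<noteq> 0" for a
    using that s V by (simp add: field_simps)
  ultimately show "Nf * s / V = (Ef2 - f0^2)
      / (Ef2 - f0^2 * h10^2 / s + (Eh2 - h20^2) / s + 2 * h10 * ((fh - f0 * h20) / s))
      * (Nf / (Ef2 - f0^2))"
    using Vf by simp
  assume "f0 * h10 * h20 \<le> h10 * fh"
  then have "(Ef2 - f0^2) * s \<le> V"
    unfolding V_def using h10 h20 by (rule variance_model_ge)
  then have "Nf * (s * (Ef2 - f0^2)) \<le> Nf * V"
    using Nf by (simp add: mult.commute mult_left_mono)
  then show "Nf * s / V \<le> Nf / (Ef2 - f0^2)"
    using Vf V by (simp add: divide_simps)
qed

theorem theoremA1:
  fixes n m k i :: nat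
    and f :: "(nat \<Rightarrow> real) \<Rightarrow> real"
    and h1 :: "(nat \<Rightarrow> real) \<Rightarrow> real"
    and h2 :: "(nat \<Rightarrow> real) \<Rightarrow> (nat \<Rightarrow> real) \<Rightarrow> real"
  assumes "n \<ge> 1" "m \<ge> 1" "k \<ge> 1" "i \<in> {1..n}"
    and f_meas: "f \<in> borel_measurable (cube {1..n})"
    and f_L2: "integrable (cube {1..n}) (\<lambda>x. (f x)^2)"
    and h1_meas: "h1 \<in> borel_measurable (cube {1..m})"
    and h1_L2: "integrable (cube {1..m}) (\<lambda>\<xi>. (h1 \<xi>)^2)"
    and h2_meas: "case_prod h2 \<in> borel_measurable (cube ({1..n} - {i}) \<Otimes>\<^sub>M cube {1..k})"
    and h2_L2: "integrable (cube ({1..n} - {i}) \<Otimes>\<^sub>M cube {1..k}) (\<lambda>(u, \<eta>). (h2 u \<eta>)^2)"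
    and f_nonconst: "\<not> (\<exists>c. AE x in cube {1..n}. f x = c)"
    and g_def: "g = (\<lambda>(x, \<xi>, \<eta>). f x * h1 \<xi> + h2 (restrict x ({1..n} - {i})) \<eta>)"
    and var_g: "var (cube {1..n} \<Otimes>\<^sub>M (cube {1..m} \<Otimes>\<^sub>M cube {1..k})) g > 0"
    and h1_sq_pos: "(\<integral>\<xi>. (h1 \<xi>)^2 \<partial>cube {1..m}) > 0"
  shows "total_sobol {1..n} (cube {1..m} \<Otimes>\<^sub>M cube {1..k}) i g
           = gamma_coef n m k i f h1 h2 * total_sobol_x {1..n} i f
         \<and> (mean (cube {1..m}) h1
                * mean (cube {1..n} \<Otimes>\<^sub>M cube {1..k})
                    (\<lambda>(x, \<eta>). f x * h2 (restrict x ({1..n} - {i})) \<eta>)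
              \<ge> mean (cube {1..n}) f * mean (cube {1..m}) h1
                * mean (cube ({1..n} - {i}) \<Otimes>\<^sub>M cube {1..k}) (\<lambda>(u, \<eta>). h2 u \<eta>) \<longrightarrow>
              total_sobol {1..n} (cube {1..m} \<Otimes>\<^sub>M cube {1..k}) i g \<le> total_sobol_x {1..n} i f)"
proof -
  interpret separable_model "cube {1..m}" "cube {1..k}" "{1..n}" i f h1 h2
    by (intro separable_model.intro separable_model_axioms.intro prob_space_cube)
      (use assms(4) f_meas f_L2 h1_meas h1_L2 h2_meas h2_L2 in simp_all)
  interpret RC: prob_space "cube ({1..n} - {i}) \<Otimes>\<^sub>M cube {1..k}"
    by (rule prob_space_cube_pair_C)
  have g: "g = model_fun"
    unfolding g_def model_fun_def h2_lift_def by simp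
  have h2_sq: "integrable (cube ({1..n} - {i}) \<Otimes>\<^sub>M cube {1..k}) (\<lambda>u. (case_prod h2 u)^2)"
    using h2_L2 by (simp add: split_beta')
  note ratio = sobol_index_algebra[OF h1_sq_pos
      A.square_mean_less_second_moment[OF f_meas f_L2 f_nonconst]
      var_g[unfolded g var_model_fun] sobol_numerator_f_nonneg
      B.square_mean_le_second_moment[OF h1_meas h1_L2]
      RC.square_mean_le_second_moment[OF h2_meas h2_sq]]
  show ?thesis
    unfolding g total_sobol_model_fun var_model_fun
    unfolding total_sobol_x_def var_def gamma_coef_def Let_def mean_def
    by (fact ratio)
qed

end
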